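(* Let $R_1\subset J_1(E)$ be a linear first order system on a vector bundle $E$ of fiber dimension $m$ over an $n$-dimensional base, with coefficients in a differential field $K$, which is involutive and has no zero order equations. Assume the system is written in $\delta$-regular coordinates and solved as in the definition of involution, and that the number $\beta=\beta^n_1$ of equations of class $n$ satisfies $\beta<m$, these equations being solved with respect to $y^1_n,\dots,y^\beta_n$. Then there is a change of unknowns of the form $\bar y^k=y^k-\sum_{l=\beta+1}^m a^k_l(x)\,y^l$ for $1\le k\le\beta$ and $\bar y^l=y^l$ for $\beta<l\le m$ (with $a^k_l\in K$) such that, in the new unknowns: (i) the equations of class $n$ contain $y^{\beta+1},\dots,y^m$ only through $y^l$ and $y^l_i$ with $1\le i\le n-1$ (no jet $y^l_n$, $l>\beta$, appears); (ii) the equations of class $1,\dots,n-1$ contain neither $y^{\beta+1},\dots,y^m$ nor any of their jets.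
   Context: $y^k_i$ denotes the formal first derivative $d_iy^k$. A first order equation solved in a coordinate system is of class $i$ if its leading (principal) jet is of the form $y^k_i$ and it contains no jet $y^l_j$ with $j>i$. Procedure defining classes: solve the maximum number $\beta^n_1$ of equations with respect to jets of class $n$, then the maximum number of remaining equations with respect to jets of class $n-1$, and so on; for an equation of class $i$ the variables $x^1,\dots,x^i$ are multiplicative and $x^{i+1},\dots,x^n$ non-multiplicative. The system is involutive if it is formally integrable and its first prolongation is obtained by prolonging each equation only with respect to its multiplicative variables (coordinates in which this procedure is carried out are called $\delta$-regular). "No zero order equations" means the induced projection $R_1\to E$ is onto. *)

theory Defs
  imports Main
begin

text \<open>
  Unknowns are indexed by k in {1..m},
  base coordinates by i in {1..n}.  A jet coordinate y^k_mu is indexed by a pair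
  (k, mu) with mu :: nat => nat a multi-index (supported in {1..n}).
  A linear differential expression (homogeneous, with coefficients in the
  differential field 'k) is a coefficient function on jet coordinates.
\<close>

type_synonym 'k lexpr = "nat \<times> (nat \<Rightarrow> nat) \<Rightarrow> 'k"

definition zero_mi :: "nat \<Rightarrow> nat" where
  "zero_mi = (\<lambda>_. 0)"

definition unit_mi :: "nat \<Rightarrow> nat \<Rightarrow> nat" where
  "unit_mi i = (\<lambda>j. if j = i then 1 else 0)"

definition mi_deg :: "nat \<Rightarrow> (nat \<Rightarrow> nat) \<Rightarrow> nat" where
  "mi_deg n \<nu> = (\<Sum>j\<in>{1..n}. \<nu> j)"

definition diff_field :: "nat \<Rightarrow> (nat \<Rightarrow> 'k::field \<Rightarrow> 'k) \<Rightarrow> bool" where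
  "diff_field n \<delta> \<longleftrightarrow>
     (\<forall>i\<in>{1..n}. \<forall>x y. \<delta> i (x + y) = \<delta> i x + \<delta> i y \<and> \<delta> i (x * y) = \<delta> i x * y + x * \<delta> i y)
   \<and> (\<forall>i\<in>{1..n}. \<forall>j\<in>{1..n}. \<forall>x. \<delta> i (\<delta> j x) = \<delta> j (\<delta> i x))"

text \<open>Formal derivative d_i of a linear expression:
  d_i (a y^k_mu) = (delta_i a) y^k_mu + a y^k_{mu + 1_i}.\<close>
definition fderiv :: "(nat \<Rightarrow> 'k::field \<Rightarrow> 'k) \<Rightarrow> nat \<Rightarrow> 'k lexpr \<Rightarrow> 'k lexpr" where
  "fderiv \<delta> i P = (\<lambda>(k, \<mu>). \<delta> i (P (k, \<mu>)) + (if 0 < \<mu> i then P (k, \<mu>(i := \<mu> i - 1)) else 0))"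

primrec dmul :: "(nat \<Rightarrow> 'k::field \<Rightarrow> 'k) \<Rightarrow> nat \<Rightarrow> (nat \<Rightarrow> nat) \<Rightarrow> 'k lexpr \<Rightarrow> 'k lexpr" where
  "dmul \<delta> 0 \<nu> P = P"
| "dmul \<delta> (Suc j) \<nu> P = (fderiv \<delta> (Suc j) ^^ \<nu> (Suc j)) (dmul \<delta> j \<nu> P)"

definition kspan :: "'k::field lexpr set \<Rightarrow> 'k lexpr set" where
  "kspan S = {P. \<exists>F c. finite F \<and> F \<subseteq> S \<and> P = (\<lambda>x. \<Sum>s\<in>F. c s * s x)}"

definition ord_le :: "nat \<Rightarrow> nat \<Rightarrow> 'k::zero lexpr \<Rightarrow> bool" where
  "ord_le n q P \<longleftrightarrow> (\<forall>k \<mu>. P (k, \<mu>) \<noteq> 0 \<longrightarrow> mi_deg n \<mu> \<le> q)"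

text \<open>Equations of the r-th prolongation rho_r(R_1) = R_{1+r}.\<close>
definition prol :: "(nat \<Rightarrow> 'k::field \<Rightarrow> 'k) \<Rightarrow> nat \<Rightarrow> ('e \<Rightarrow> 'k lexpr) \<Rightarrow> 'e set \<Rightarrow> nat \<Rightarrow> 'k lexpr set" where
  "prol \<delta> n \<Phi> T r = kspan {dmul \<delta> n \<nu> (\<Phi> \<tau>) | \<tau> \<nu>.
       \<tau> \<in> T \<and> (\<forall>j. j \<notin> {1..n} \<longrightarrow> \<nu> j = 0) \<and> mi_deg n \<nu> \<le> r}"

text \<open>Formal integrability: R_{1+r+1} -> R_{1+r} onto for every r, i.e. (dually)
  every equation of order <= 1+r in the (r+1)-th prolongation already lies in the r-th.\<close>
definition formally_integrable :: "(nat \<Rightarrow> 'k::field \<Rightarrow> 'k) \<Rightarrow> nat \<Rightarrow> ('e \<Rightarrow> 'k lexpr) \<Rightarrow> 'e set \<Rightarrow> bool" where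
  "formally_integrable \<delta> n \<Phi> T \<longleftrightarrow>
     (\<forall>r. \<forall>P\<in>prol \<delta> n \<Phi> T (Suc r). ord_le n (Suc r) P \<longrightarrow> P \<in> prol \<delta> n \<Phi> T r)"

text \<open>No zero order equations: R_1 -> E onto.\<close>
definition no_zero_order :: "nat \<Rightarrow> ('e \<Rightarrow> 'k::field lexpr) \<Rightarrow> 'e set \<Rightarrow> bool" where
  "no_zero_order n \<Phi> T \<longleftrightarrow> (\<forall>P\<in>kspan (\<Phi> ` T). ord_le n 0 P \<longrightarrow> P = (\<lambda>_. 0))"

definition solved_first_order ::
  "nat \<Rightarrow> nat \<Rightarrow> ('e \<Rightarrow> 'k::field lexpr) \<Rightarrow> 'e set \<Rightarrow> ('e \<Rightarrow> nat) \<Rightarrow> ('e \<Rightarrow> nat) \<Rightarrow> bool" where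
  "solved_first_order n m \<Phi> T cls ld \<longleftrightarrow>
     (\<forall>\<tau>\<in>T. \<forall>k \<mu>. \<Phi> \<tau> (k, \<mu>) \<noteq> 0 \<longrightarrow> k \<in> {1..m} \<and> (\<mu> = zero_mi \<or> (\<exists>i\<in>{1..n}. \<mu> = unit_mi i)))
   \<and> (\<forall>\<tau>\<in>T. cls \<tau> \<in> {1..n} \<and> ld \<tau> \<in> {1..m})
   \<and> (\<forall>\<tau>\<in>T. \<Phi> \<tau> (ld \<tau>, unit_mi (cls \<tau>)) = 1)
   \<and> (\<forall>\<tau>\<in>T. \<forall>k j. cls \<tau> < j \<longrightarrow> \<Phi> \<tau> (k, unit_mi j) = 0)
   \<and> (\<forall>\<tau>\<in>T. \<forall>\<tau>'\<in>T. \<tau> \<noteq> \<tau>' \<longrightarrow> cls \<tau> = cls \<tau>' \<longrightarrow>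
        ld \<tau> \<noteq> ld \<tau>' \<and> \<Phi> \<tau> (ld \<tau>', unit_mi (cls \<tau>)) = 0)"

text \<open>Involutive (in the given, delta-regular, solved coordinates): formally integrable and
  the first prolongation is generated by the equations and their multiplicative
  prolongations d_i Phi^tau, 1 <= i <= class of tau.\<close>
definition involutive ::
  "(nat \<Rightarrow> 'k::field \<Rightarrow> 'k) \<Rightarrow> nat \<Rightarrow> ('e \<Rightarrow> 'k lexpr) \<Rightarrow> 'e set \<Rightarrow> ('e \<Rightarrow> nat) \<Rightarrow> bool" where
  "involutive \<delta> n \<Phi> T cls \<longleftrightarrow>
     formally_integrable \<delta> n \<Phi> T
   \<and> prol \<delta> n \<Phi> T 1 = kspan (\<Phi> ` T \<union> {fderiv \<delta> i (\<Phi> \<tau>) | \<tau> i. \<tau> \<in> T \<and> 1 \<le> i \<and> i \<le> cls \<tau>})"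

text \<open>Rewriting a first order linear expression in the new unknowns
  ybar^k = y^k - sum_{l>beta} a k l y^l (k <= beta), ybar^l = y^l (l > beta), i.e. substituting
  y^k = ybar^k + sum_l a k l ybar^l and
  y^k_i = ybar^k_i + sum_l (a k l ybar^l_i + (delta_i (a k l)) ybar^l).
  The result is the coefficient function in the jets of the new unknowns.\<close>
definition change_unknowns ::
  "(nat \<Rightarrow> 'k::field \<Rightarrow> 'k) \<Rightarrow> nat \<Rightarrow> nat \<Rightarrow> nat \<Rightarrow> (nat \<Rightarrow> nat \<Rightarrow> 'k) \<Rightarrow> 'k lexpr \<Rightarrow> 'k lexpr" where
  "change_unknowns \<delta> n m \<beta> a P = (\<lambda>(l, \<mu>).
     P (l, \<mu>) + (if \<beta> < l \<and> l \<le> m then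
        (\<Sum>k\<in>{1..\<beta>}. P (k, \<mu>) * a k l
            + (if \<mu> = zero_mi then (\<Sum>i\<in>{1..n}. P (k, unit_mi i) * \<delta> i (a k l)) else 0))
      else 0))"

end

theory Submission
  imports Defs
begin

(*
  Let C be the set of equations of class n; equation tau in C is solved
  for y^{ld tau}_n, and ld is a bijection C -> {1..beta}.  Choose
      a k l = - (coefficient of y^l_n in the class n equation with leading unknown k).
  Then (i) holds by construction: in the new unknowns the coefficient of ybar^l_n in
  the class n equation tau is  Phi tau (l, 1_n) + a (ld tau) l = 0.

  For (ii) take an equation Psi of class < n.  Since d_n is non-multiplicative for Psi,
  involution puts the second order expression d_n Phi_Psi into the span of the equations
  and their multiplicative prolongations.  Among these only d_n Phi_tau, tau in C, contain
  y^{ld tau}_{nn}, whereas d_n Phi_Psi does not; so every linear functional vanishing on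
  the equations and on the prolongations d_i Phi_tau with i < n vanishes on d_n Phi_Psi
  (lemma nonmultiplicative_prolongation).  Applying this to the functionals reading off
  the coefficients of ybar^l_{jn} and ybar^l_n in the new unknowns shows that the
  coefficients of ybar^l_j and ybar^l in Phi_Psi vanish.
*)

definition unit2_mi :: "nat \<Rightarrow> nat \<Rightarrow> nat \<Rightarrow> nat" where
  "unit2_mi i j = (\<lambda>x. unit_mi i x + unit_mi j x)"

lemma unit_ne_zero_mi: "unit_mi i \<noteq> zero_mi"
  by (auto simp: unit_mi_def zero_mi_def fun_eq_iff)

lemma unit2_ne_zero_mi: "unit2_mi i j \<noteq> zero_mi"
  by (auto simp: unit2_mi_def unit_mi_def zero_mi_def fun_eq_iff)

lemma unit2_ne_unit_mi: "unit2_mi i j \<noteq> unit_mi k"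
proof
  assume eq: "unit2_mi i j = unit_mi k"
  have "unit2_mi i j i = unit_mi k i" "unit2_mi i j j = unit_mi k j"
    using eq by simp_all
  then show False
    by (auto simp: unit2_mi_def unit_mi_def split: if_splits)
qed

lemma unit2_mi_pos: "0 < unit2_mi j n i \<longleftrightarrow> i = j \<or> i = n"
  by (auto simp: unit2_mi_def unit_mi_def)

lemma unit2_mi_lower_snd: "(unit2_mi j n)(n := unit2_mi j n n - 1) = unit_mi j"
  by (auto simp: unit2_mi_def unit_mi_def fun_eq_iff)

lemma unit2_mi_lower_fst: "(unit2_mi j n)(j := unit2_mi j n j - 1) = unit_mi n"
  by (auto simp: unit2_mi_def unit_mi_def fun_eq_iff)

lemma unit_mi_lower: "(unit_mi n)(n := unit_mi n n - 1) = zero_mi"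
  by (auto simp: unit_mi_def zero_mi_def fun_eq_iff)

lemma dmul_unit_mi:
  "dmul \<delta> j (unit_mi i) P = (if 1 \<le> i \<and> i \<le> j then fderiv \<delta> i P else P)"
  by (induction j) (auto simp: unit_mi_def)

lemma mi_deg_unit_mi: "i \<in> {1..n} \<Longrightarrow> mi_deg n (unit_mi i) = 1"
  by (simp add: mi_deg_def unit_mi_def)

lemma diff_field_zero:
  assumes "diff_field n \<delta>" "i \<in> {1..n}"
  shows "\<delta> i 0 = 0"
proof -
  have "\<delta> i (0 * 0) = \<delta> i 0 * 0 + 0 * \<delta> i 0"
    using assms unfolding diff_field_def by blast
  then show ?thesis by simp
qed

lemma diff_field_one:
  assumes "diff_field n \<delta>" "i \<in> {1..n}"
  shows "\<delta> i 1 = 0"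
proof -
  have "\<delta> i (1 * 1) = \<delta> i 1 * 1 + 1 * \<delta> i 1"
    using assms unfolding diff_field_def by blast
  then have "\<delta> i 1 + \<delta> i 1 = \<delta> i 1 + 0" by simp
  then show ?thesis by (rule add_left_imp_eq)
qed

lemma diff_field_uminus:
  assumes "diff_field n \<delta>" "i \<in> {1..n}"
  shows "\<delta> i (- x) = - \<delta> i x"
proof -
  have "\<delta> i (x + - x) = \<delta> i x + \<delta> i (- x)"
    using assms unfolding diff_field_def by blast
  then show ?thesis using diff_field_zero[OF assms] by (metis add.commute eq_neg_iff_add_eq_0)
qed

text \<open>The coefficient of y^k_{jn} in d_i P when P has no second order part: only
  differentiation in direction n or j can produce this jet.\<close>
lemma fderiv_at_unit2:
  assumes "\<delta> i 0 = 0" and "P (k, unit2_mi j n) = 0"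
  shows "fderiv \<delta> i P (k, unit2_mi j n) =
           (if i = n then P (k, unit_mi j) else if i = j then P (k, unit_mi n) else 0)"
  using assms unit2_mi_pos[of j n i] unit2_mi_lower_snd[of j n] unit2_mi_lower_fst[of j n]
  by (auto simp: fderiv_def)

lemma fderiv_at_unit:
  "fderiv \<delta> i P (k, unit_mi n) = \<delta> i (P (k, unit_mi n)) + (if i = n then P (k, zero_mi) else 0)"
proof -
  have "0 < unit_mi n i \<longleftrightarrow> i = n" by (simp add: unit_mi_def)
  then show ?thesis using unit_mi_lower[of n] by (auto simp: fderiv_def)
qed

section \<open>Linear functionals on linear expressions\<close>

definition linear_functional :: "('k::field lexpr \<Rightarrow> 'k) \<Rightarrow> bool" where
  "linear_functional L \<longleftrightarrow>
     (\<forall>F c. finite F \<longrightarrow> L (\<lambda>x. \<Sum>s\<in>F. c s * s x) = (\<Sum>s\<in>F. c s * L s))"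

lemma linear_functional_eval: "linear_functional (\<lambda>Q. Q p)"
  by (simp add: linear_functional_def)

lemma linear_functional_add:
  "linear_functional L1 \<Longrightarrow> linear_functional L2 \<Longrightarrow> linear_functional (\<lambda>Q. L1 Q + L2 Q)"
  by (simp add: linear_functional_def sum.distrib distrib_left)

lemma linear_functional_diff:
  "linear_functional L1 \<Longrightarrow> linear_functional L2 \<Longrightarrow> linear_functional (\<lambda>Q. L1 Q - L2 Q)"
  by (simp add: linear_functional_def sum_subtractf right_diff_distrib)

lemma linear_functional_scale:
  "linear_functional L \<Longrightarrow> linear_functional (\<lambda>Q. L Q * w)"
  by (simp add: linear_functional_def sum_distrib_right mult.assoc)

lemma linear_functional_sum:
  fixes L :: "'i \<Rightarrow> 'k::field lexpr \<Rightarrow> 'k"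
  assumes "finite I" and "\<And>i. i \<in> I \<Longrightarrow> linear_functional (L i)"
  shows "linear_functional (\<lambda>Q. \<Sum>i\<in>I. L i Q)"
  unfolding linear_functional_def
proof (intro allI impI)
  fix F :: "'k lexpr set" and c
  assume "finite F"
  then have "(\<Sum>i\<in>I. L i (\<lambda>x. \<Sum>s\<in>F. c s * s x)) = (\<Sum>i\<in>I. \<Sum>s\<in>F. c s * L i s)"
    using assms(2) unfolding linear_functional_def by simp
  also have "\<dots> = (\<Sum>s\<in>F. c s * (\<Sum>i\<in>I. L i s))"
    by (subst sum.swap) (simp add: sum_distrib_left)
  finally show "(\<Sum>i\<in>I. L i (\<lambda>x. \<Sum>s\<in>F. c s * s x)) = (\<Sum>s\<in>F. c s * (\<Sum>i\<in>I. L i s))" .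
qed

lemma linear_functional_kspan:
  assumes "linear_functional L" and "\<And>s. s \<in> S \<Longrightarrow> L s = 0" and "P \<in> kspan S"
  shows "L P = 0"
  using assms unfolding kspan_def linear_functional_def
  by (auto simp: subset_iff intro!: sum.neutral)

section \<open>Solved involutive first order systems\<close>

locale solved_involutive_system =
  fixes \<delta> :: "nat \<Rightarrow> 'k::field \<Rightarrow> 'k"
    and n m \<beta> :: nat
    and T :: "nat set"
    and \<Phi> :: "nat \<Rightarrow> 'k lexpr"
    and cls ld :: "nat \<Rightarrow> nat"
  assumes diff: "diff_field n \<delta>"
    and fin: "finite T"
    and solved: "solved_first_order n m \<Phi> T cls ld"
    and inv: "involutive \<delta> n \<Phi> T cls"
    and card_top: "card {\<tau>\<in>T. cls \<tau> = n} = \<beta>"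
    and lead_top: "ld ` {\<tau>\<in>T. cls \<tau> = n} = {1..\<beta>}"
begin

definition top :: "nat set" where
  "top = {\<tau>\<in>T. cls \<tau> = n}"

definition a :: "nat \<Rightarrow> nat \<Rightarrow> 'k" where
  "a k l = - \<Phi> (inv_into top ld k) (l, unit_mi n)"

lemma first_order:
  "\<tau> \<in> T \<Longrightarrow> \<Phi> \<tau> (k, \<mu>) \<noteq> 0 \<Longrightarrow> \<mu> = zero_mi \<or> (\<exists>i. \<mu> = unit_mi i)"
  using solved unfolding solved_first_order_def by blast

lemma no_second_order: "\<tau> \<in> T \<Longrightarrow> \<Phi> \<tau> (k, unit2_mi j n) = 0"
  using first_order unit2_ne_zero_mi unit2_ne_unit_mi by blast

lemma no_higher_class: "\<tau> \<in> T \<Longrightarrow> cls \<tau> < j \<Longrightarrow> \<Phi> \<tau> (k, unit_mi j) = 0"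
  using solved unfolding solved_first_order_def by blast

lemma cls_range: "\<tau> \<in> T \<Longrightarrow> 1 \<le> cls \<tau> \<and> cls \<tau> \<le> n"
  using solved unfolding solved_first_order_def by auto

lemma n_pos: "\<tau> \<in> T \<Longrightarrow> n \<in> {1..n}"
  using cls_range by force

lemma below_top: "\<tau> \<in> T \<Longrightarrow> \<tau> \<notin> top \<Longrightarrow> cls \<tau> < n"
  using cls_range unfolding top_def by force

lemma finite_top: "finite top"
  using fin unfolding top_def by simp

lemma inj_on_top: "inj_on ld top"
proof -
  have "card (ld ` top) = card top"
    using card_top lead_top unfolding top_def by simp
  then show ?thesis using eq_card_imp_inj_on[OF finite_top] by blast
qed

lemma ld_top: "\<tau> \<in> top \<Longrightarrow> ld \<tau> \<in> {1..\<beta>}"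
  using lead_top unfolding top_def by blast

lemma top_leading_coeff:
  assumes "\<tau> \<in> top" "k \<in> {1..\<beta>}"
  shows "\<Phi> \<tau> (k, unit_mi n) = (if k = ld \<tau> then 1 else 0)"
proof -
  obtain \<tau>' where \<tau>': "\<tau>' \<in> top" "k = ld \<tau>'"
    using assms(2) lead_top unfolding top_def by force
  show ?thesis
  proof (cases "\<tau>' = \<tau>")
    case True
    then show ?thesis using \<tau>' solved unfolding solved_first_order_def top_def by auto
  next
    case False
    then have "ld \<tau>' \<noteq> ld \<tau>" using inj_on_top \<tau>' assms(1) by (meson inj_on_eq_iff)
    moreover have "\<Phi> \<tau> (ld \<tau>', unit_mi (cls \<tau>)) = 0"
      using solved False \<tau>' assms(1) unfolding solved_first_order_def top_def by auto
    ultimately show ?thesis using \<tau>' assms(1) unfolding top_def by auto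
  qed
qed

lemma a_ld: "\<tau> \<in> top \<Longrightarrow> a (ld \<tau>) l = - \<Phi> \<tau> (l, unit_mi n)"
  unfolding a_def using inj_on_top by simp

lemma sum_top_leading:
  assumes "\<tau> \<in> top"
  shows "(\<Sum>k\<in>{1..\<beta>}. \<Phi> \<tau> (k, unit_mi n) * f k) = f (ld \<tau>)"
proof -
  have "(\<Sum>k\<in>{1..\<beta>}. \<Phi> \<tau> (k, unit_mi n) * f k) = (\<Sum>k\<in>{1..\<beta>}. if k = ld \<tau> then f k else 0)"
    by (rule sum.cong) (auto simp: top_leading_coeff[OF assms])
  also have "\<dots> = f (ld \<tau>)" using ld_top[OF assms] by (simp add: sum.delta')
  finally show ?thesis .
qed

lemma top_free_of_dn:
  "\<tau> \<in> top \<Longrightarrow> \<Phi> \<tau> (l, unit_mi n) + (\<Sum>k\<in>{1..\<beta>}. \<Phi> \<tau> (k, unit_mi n) * a k l) = 0"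
  using sum_top_leading[of \<tau> "\<lambda>k. a k l"] a_ld[of \<tau> l] by simp

lemma prolongation_coeff_unit2:
  assumes "\<tau> \<in> T" "i \<in> {1..n}"
  shows "fderiv \<delta> i (\<Phi> \<tau>) (k, unit2_mi j n) =
           (if i = n then \<Phi> \<tau> (k, unit_mi j) else if i = j then \<Phi> \<tau> (k, unit_mi n) else 0)"
  using fderiv_at_unit2[of \<delta> i "\<Phi> \<tau>" k j n] diff_field_zero[OF diff assms(2)]
    no_second_order[OF assms(1)] by simp

definition generators :: "'k lexpr set" where
  "generators = \<Phi> ` T \<union> {fderiv \<delta> i (\<Phi> \<tau>) | \<tau> i. \<tau> \<in> T \<and> 1 \<le> i \<and> i \<le> cls \<tau>}"

lemma dn_in_span_generators:
  assumes "\<tau> \<in> T"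
  shows "fderiv \<delta> n (\<Phi> \<tau>) \<in> kspan generators"
proof -
  have n: "n \<in> {1..n}" using n_pos[OF assms] .
  have "fderiv \<delta> n (\<Phi> \<tau>) \<in> {dmul \<delta> n \<nu> (\<Phi> \<tau>) | \<tau> \<nu>.
          \<tau> \<in> T \<and> (\<forall>j. j \<notin> {1..n} \<longrightarrow> \<nu> j = 0) \<and> mi_deg n \<nu> \<le> 1}"
    using assms n mi_deg_unit_mi[OF n] dmul_unit_mi[of \<delta> n n]
    by (intro CollectI exI[of _ \<tau>] exI[of _ "unit_mi n"]) (auto simp: unit_mi_def)
  then have "fderiv \<delta> n (\<Phi> \<tau>) \<in> prol \<delta> n \<Phi> T 1"
    unfolding prol_def kspan_def
    by (intro CollectI exI[of _ "{fderiv \<delta> n (\<Phi> \<tau>)}"] exI[of _ "\<lambda>_. 1"]) auto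
  then show ?thesis using inv unfolding involutive_def generators_def by simp
qed

text \<open>Key consequence of involution: for an equation Psi of class < n, the
  non-multiplicative prolongation d_n Phi_Psi is a combination of the equations and of
  the multiplicative prolongations in directions i < n only.  Stated dually: a linear
  functional vanishing on those vanishes on d_n Phi_Psi.  The proof corrects L by the
  functionals reading off the coefficient of y^{ld tau}_{nn}, which single out the
  prolongations d_n Phi_tau of the class n equations and vanish on d_n Phi_Psi.\<close>
lemma nonmultiplicative_prolongation:
  assumes L: "linear_functional L"
    and eqs: "\<And>\<tau>. \<tau> \<in> T \<Longrightarrow> L (\<Phi> \<tau>) = 0"
    and prols: "\<And>\<tau> i. \<tau> \<in> T \<Longrightarrow> 1 \<le> i \<Longrightarrow> i \<le> cls \<tau> \<Longrightarrow> i \<noteq> n \<Longrightarrow> L (fderiv \<delta> i (\<Phi> \<tau>)) = 0"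
    and \<Psi>: "\<Psi> \<in> T" "cls \<Psi> < n"
  shows "L (fderiv \<delta> n (\<Phi> \<Psi>)) = 0"
proof -
  define M where "M \<tau> Q = Q (ld \<tau>, unit2_mi n n)" for \<tau> and Q :: "'k lexpr"
  define L' where "L' Q = L Q - (\<Sum>\<tau>\<in>top. L (fderiv \<delta> n (\<Phi> \<tau>)) * M \<tau> Q)" for Q
  have "linear_functional L'"
    unfolding L'_def M_def using L finite_top
    by (intro linear_functional_diff linear_functional_sum)
       (simp_all add: mult.commute[of "L _"] linear_functional_scale[OF linear_functional_eval, simplified])
  have M_fderiv: "M \<tau> (fderiv \<delta> i (\<Phi> \<tau>')) = (if i = n then \<Phi> \<tau>' (ld \<tau>, unit_mi n) else 0)"
    if "\<tau>' \<in> T" "i \<in> {1..n}" for \<tau> \<tau>' i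
    unfolding M_def using prolongation_coeff_unit2[OF that] by simp
  have M_top: "M \<tau> (fderiv \<delta> n (\<Phi> \<tau>')) = (if \<tau> = \<tau>' then 1 else 0)"
    if "\<tau> \<in> top" "\<tau>' \<in> top" for \<tau> \<tau>'
    using that M_fderiv[of \<tau>' n \<tau>] top_leading_coeff[OF that(2) ld_top[OF that(1)]]
      inj_on_top n_pos
    by (auto simp: top_def dest: inj_onD)
  have "L' s = 0" if "s \<in> generators" for s
    using that unfolding generators_def
  proof (elim UnE imageE CollectE exE conjE)
    fix \<tau> assume "s = \<Phi> \<tau>" "\<tau> \<in> T"
    then show "L' s = 0" unfolding L'_def M_def using eqs no_second_order by simp
  next
    fix \<tau> i assume s: "s = fderiv \<delta> i (\<Phi> \<tau>)" and \<tau>: "\<tau> \<in> T" "1 \<le> i" "i \<le> cls \<tau>"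
    show "L' s = 0"
    proof (cases "i = n")
      case True
      then have \<tau>_top: "\<tau> \<in> top" using \<tau> cls_range unfolding top_def by force
      have "(\<Sum>\<sigma>\<in>top. L (fderiv \<delta> n (\<Phi> \<sigma>)) * M \<sigma> s)
              = (\<Sum>\<sigma>\<in>top. if \<sigma> = \<tau> then L (fderiv \<delta> n (\<Phi> \<sigma>)) else 0)"
        using s True M_top[OF _ \<tau>_top] by (intro sum.cong) auto
      then show ?thesis unfolding L'_def using s True \<tau>_top finite_top by (simp add: sum.delta')
    next
      case False
      then show ?thesis
        unfolding L'_def using s \<tau> prols M_fderiv[of \<tau> i] cls_range[of \<tau>] by simp
    qed
  qed
  then have "L' (fderiv \<delta> n (\<Phi> \<Psi>)) = 0"
    using linear_functional_kspan[OF \<open>linear_functional L'\<close>] dn_in_span_generators[OF \<Psi>(1)]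
    by blast
  moreover have "M \<tau> (fderiv \<delta> n (\<Phi> \<Psi>)) = 0" for \<tau>
    using M_fderiv[OF \<Psi>(1) n_pos[OF \<Psi>(1)]] no_higher_class \<Psi> by simp
  ultimately show ?thesis unfolding L'_def by simp
qed

text \<open>Part (ii), first order jets: in the new unknowns an equation of class < n does not
  contain ybar^l_j.  Read off the coefficient of ybar^l_{jn} in d_n Phi_Psi.\<close>
lemma low_class_first_order:
  assumes \<Psi>: "\<Psi> \<in> T" "cls \<Psi> < n"
  shows "\<Phi> \<Psi> (l, unit_mi j) + (\<Sum>k\<in>{1..\<beta>}. \<Phi> \<Psi> (k, unit_mi j) * a k l) = 0"
proof -
  define L where "L Q = Q (l, unit2_mi j n) + (\<Sum>k\<in>{1..\<beta>}. Q (k, unit2_mi j n) * a k l)"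
    for Q :: "'k lexpr"
  have "L (fderiv \<delta> n (\<Phi> \<Psi>)) = 0"
  proof (rule nonmultiplicative_prolongation[OF _ _ _ \<Psi>])
    show "linear_functional L" unfolding L_def
      by (intro linear_functional_add linear_functional_eval linear_functional_sum
          finite_atLeastAtMost linear_functional_scale)
  next
    fix \<tau> assume "\<tau> \<in> T"
    then show "L (\<Phi> \<tau>) = 0" unfolding L_def using no_second_order by simp
  next
    fix \<tau> i assume \<tau>: "\<tau> \<in> T" "1 \<le> i" "i \<le> cls \<tau>" "i \<noteq> n"
    then have i: "i \<in> {1..n}" using cls_range by force
    have coeff: "fderiv \<delta> i (\<Phi> \<tau>) (k, unit2_mi j n) = (if i = j then \<Phi> \<tau> (k, unit_mi n) else 0)"
      for k using prolongation_coeff_unit2[OF \<tau>(1) i] \<tau>(4) by simp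
    show "L (fderiv \<delta> i (\<Phi> \<tau>)) = 0"
      unfolding L_def coeff using top_free_of_dn no_higher_class[OF \<tau>(1) below_top[OF \<tau>(1)]]
      by (cases "\<tau> \<in> top") auto
  qed
  then show ?thesis unfolding L_def using prolongation_coeff_unit2[OF \<Psi>(1) n_pos[OF \<Psi>(1)]] by simp
qed

text \<open>Read off the coefficient of ybar^l_n in d_n Phi_Psi; the derivative terms of the
  change of unknowns cancel because the class n equations have constant leading part.\<close>
lemma low_class_zero_order:
  assumes \<Psi>: "\<Psi> \<in> T" "cls \<Psi> < n"
  shows "\<Phi> \<Psi> (l, zero_mi) + (\<Sum>k\<in>{1..\<beta>}. \<Phi> \<Psi> (k, zero_mi) * a k l
            + (\<Sum>i\<in>{1..n}. \<Phi> \<Psi> (k, unit_mi i) * \<delta> i (a k l))) = 0"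
proof -
  define L where "L Q = Q (l, unit_mi n) + (\<Sum>k\<in>{1..\<beta>}. Q (k, unit_mi n) * a k l
            + (\<Sum>j\<in>{1..n}. Q (k, unit2_mi j n) * \<delta> j (a k l)))" for Q :: "'k lexpr"
  have "L (fderiv \<delta> n (\<Phi> \<Psi>)) = 0"
  proof (rule nonmultiplicative_prolongation[OF _ _ _ \<Psi>])
    show "linear_functional L" unfolding L_def
      by (intro linear_functional_add linear_functional_eval linear_functional_sum
          finite_atLeastAtMost linear_functional_scale)
  next
    fix \<tau> assume \<tau>: "\<tau> \<in> T"
    show "L (\<Phi> \<tau>) = 0"
    proof (cases "\<tau> \<in> top")
      case True
      then show ?thesis unfolding L_def using no_second_order[OF \<tau>] top_free_of_dn by simp
    next
      case False
      then show ?thesis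
        unfolding L_def using no_second_order[OF \<tau>] no_higher_class[OF \<tau> below_top[OF \<tau>]] by simp
    qed
  next
    fix \<tau> i assume \<tau>: "\<tau> \<in> T" "1 \<le> i" "i \<le> cls \<tau>" "i \<noteq> n"
    then have i: "i \<in> {1..n}" using cls_range by force
    have inner: "(\<Sum>j\<in>{1..n}. fderiv \<delta> i (\<Phi> \<tau>) (k, unit2_mi j n) * \<delta> j (a k l))
        = \<Phi> \<tau> (k, unit_mi n) * \<delta> i (a k l)" for k
    proof -
      have "(\<Sum>j\<in>{1..n}. fderiv \<delta> i (\<Phi> \<tau>) (k, unit2_mi j n) * \<delta> j (a k l))
          = (\<Sum>j\<in>{1..n}. if j = i then \<Phi> \<tau> (k, unit_mi n) * \<delta> j (a k l) else 0)"
        using \<tau>(4) by (intro sum.cong) (auto simp: prolongation_coeff_unit2[OF \<tau>(1) i])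
      then show ?thesis using i by simp
    qed
    have outer: "fderiv \<delta> i (\<Phi> \<tau>) (k, unit_mi n) = \<delta> i (\<Phi> \<tau> (k, unit_mi n))" for k
      using fderiv_at_unit[of \<delta> i "\<Phi> \<tau>" k n] \<tau>(4) by simp
    show "L (fderiv \<delta> i (\<Phi> \<tau>)) = 0"
    proof (cases "\<tau> \<in> top")
      case True
      have const: "\<delta> i (\<Phi> \<tau> (k, unit_mi n)) = 0" if "k \<in> {1..\<beta>}" for k
        using top_leading_coeff[OF True that] diff_field_zero[OF diff i] diff_field_one[OF diff i]
        by simp
      have "L (fderiv \<delta> i (\<Phi> \<tau>)) = \<delta> i (\<Phi> \<tau> (l, unit_mi n))
              + (\<Sum>k\<in>{1..\<beta>}. \<Phi> \<tau> (k, unit_mi n) * \<delta> i (a k l))"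
        unfolding L_def outer inner by (simp add: const sum.distrib)
      also have "\<dots> = \<delta> i (\<Phi> \<tau> (l, unit_mi n)) + \<delta> i (a (ld \<tau>) l)"
        using sum_top_leading[OF True] by simp
      also have "\<dots> = 0"
        using a_ld[OF True] diff_field_uminus[OF diff i] by simp
      finally show ?thesis .
    next
      case False
      then have "\<Phi> \<tau> (k, unit_mi n) = 0" for k
        using no_higher_class[OF \<tau>(1) below_top[OF \<tau>(1)]] by simp
      then show ?thesis unfolding L_def outer inner using diff_field_zero[OF diff i] by simp
    qed
  qed
  moreover have "fderiv \<delta> n (\<Phi> \<Psi>) (k, unit_mi n) = \<Phi> \<Psi> (k, zero_mi)" for k
    using fderiv_at_unit[of \<delta> n "\<Phi> \<Psi>" k n] no_higher_class[OF \<Psi>]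
      diff_field_zero[OF diff n_pos[OF \<Psi>(1)]] by simp
  ultimately show ?thesis unfolding L_def using prolongation_coeff_unit2[OF \<Psi>(1) n_pos[OF \<Psi>(1)]] by simp
qed

lemma low_class_free_of_new_unknowns:
  assumes "\<Psi> \<in> T" "cls \<Psi> < n" "\<beta> < l \<and> l \<le> m"
  shows "change_unknowns \<delta> n m \<beta> a (\<Phi> \<Psi>) (l, \<mu>) = 0"
proof -
  consider "\<mu> = zero_mi" | j where "\<mu> = unit_mi j" | "\<mu> \<noteq> zero_mi" "\<And>k. \<Phi> \<Psi> (k, \<mu>) = 0"
    using first_order[OF assms(1)] by blast
  then show ?thesis
  proof cases
    case 1
    then show ?thesis
      unfolding change_unknowns_def using assms low_class_zero_order by simp
  next
    case (2 j)
    then show ?thesis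
      unfolding change_unknowns_def using assms low_class_first_order unit_ne_zero_mi by simp
  next
    case 3
    then show ?thesis by (simp add: change_unknowns_def)
  qed
qed

end

theorem theorem2p10:
  fixes \<delta> :: "nat \<Rightarrow> 'k::field_char_0 \<Rightarrow> 'k"
    and n m \<beta> :: nat
    and T :: "nat set"
    and \<Phi> :: "nat \<Rightarrow> 'k lexpr"
    and cls ld :: "nat \<Rightarrow> nat"
  assumes K: "diff_field n \<delta>"
    and fin: "finite T"
    and solved: "solved_first_order n m \<Phi> T cls ld"
    and inv: "involutive \<delta> n \<Phi> T cls"
    and nz: "no_zero_order n \<Phi> T"
    and beta: "card {\<tau>\<in>T. cls \<tau> = n} = \<beta>"
    and lead_n: "ld ` {\<tau>\<in>T. cls \<tau> = n} = {1..\<beta>}"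
    and beta_lt: "\<beta> < m"
  shows "\<exists>a :: nat \<Rightarrow> nat \<Rightarrow> 'k.
           (\<forall>\<tau>\<in>T. cls \<tau> = n \<longrightarrow>
              (\<forall>l. \<beta> < l \<and> l \<le> m \<longrightarrow> change_unknowns \<delta> n m \<beta> a (\<Phi> \<tau>) (l, unit_mi n) = 0))
         \<and> (\<forall>\<tau>\<in>T. cls \<tau> < n \<longrightarrow>
              (\<forall>l \<mu>. \<beta> < l \<and> l \<le> m \<longrightarrow> change_unknowns \<delta> n m \<beta> a (\<Phi> \<tau>) (l, \<mu>) = 0))"
proof -
  interpret S: solved_involutive_system \<delta> n m \<beta> T \<Phi> cls ld
    using K fin solved inv beta lead_n by unfold_locales
  have top: "change_unknowns \<delta> n m \<beta> S.a (\<Phi> \<tau>) (l, unit_mi n) = 0"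
    if "\<tau> \<in> T" "cls \<tau> = n" "\<beta> < l \<and> l \<le> m" for \<tau> l
    using that S.top_free_of_dn[of \<tau> l] unit_ne_zero_mi
    by (simp add: change_unknowns_def S.top_def)
  show ?thesis
    using top S.low_class_free_of_new_unknowns by blast
qed

end
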